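(* Let $\mathfrak g=so(3)\oplus A_1$ be the real Lie algebra with basis $e_1,\dots,e_4$ and nonzero brackets $[e_1,e_2]=e_3$, $[e_2,e_3]=e_1$, $[e_3,e_1]=e_2$ ($e_4$ central). For $\varepsilon\in(0,1]$ let $K=\tfrac12\sqrt{4\varepsilon^4+1}$, $\theta_\pm=\sqrt{(2K\pm1)/(4K)}$, and $$U_\varepsilon=\begin{pmatrix}0&0&\varepsilon^2&0\\0&-\varepsilon^3&0&0\\0&0&0&\varepsilon\\-\varepsilon^2&0&-1&0\end{pmatrix},\quad W_\varepsilon=\begin{pmatrix}-\theta_-&0&0&\theta_+\\0&1&0&0\\0&0&1&0\\\theta_+&0&0&\theta_-\end{pmatrix},\quad \tilde W_\varepsilon=\begin{pmatrix}-\theta_-&0&-\theta_+&0\\0&-1&0&0\\0&0&0&1\\-\theta_+&0&\theta_-&0\end{pmatrix},$$ $D_\varepsilon=\mathrm{diag}(K+\tfrac12,\varepsilon^3,\varepsilon,K-\tfrac12)$. Then: (i) $U_\varepsilon=W_\varepsilon D_\varepsilon\tilde W_\varepsilon$, the matrices $W_\varepsilon,\tilde W_\varepsilon$ are orthogonal and converge as $\varepsilon\to0^+$ to nonsingular matrices $W_0,\tilde W_0$; (ii) the matrix $U_\varepsilon$ contracts $\mathfrak g$ to the algebra $A_{4.1}$ with nonzero brackets $[e_2,e_4]=e_1$, $[e_3,e_4]=e_2$; (iii) the matrix $\tilde U_\varepsilon=W_0D_\varepsilon\tilde W_0$ contracts $\mathfrak g$ to the algebra $A_{3.1}\oplus A_1$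 with only nonzero bracket $[e_2,e_4]=e_1$, which is not isomorphic to $A_{4.1}$.
   Context: A matrix-valued continuous function $U:(0,1]\to GL_4(\mathbb R)$ contracts a Lie algebra with structure constants $c_{ij}^k$ to the algebra with structure constants $\tilde c_{i'j'}^{k'}=\lim_{\varepsilon\to0^+}(U_\varepsilon)^i_{i'}(U_\varepsilon)^j_{j'}(U_\varepsilon^{-1})^{k'}_kc^k_{ij}$ (summation convention), provided all these limits exist; equivalently the new bracket is $\lim_{\varepsilon\to0^+}U_\varepsilon^{-1}[U_\varepsilon x,U_\varepsilon y]$. *)

theory Defs
  imports "HOL-Analysis.Analysis"
begin

text \<open>Indices: the basis vectors e1,e2,e3,e4 correspond to the elements
  1,2,3,4 of the numeral type 4 (note that 4 = 0 in that type, but the four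
  elements are pairwise distinct).\<close>

definition idx4 :: "4 \<Rightarrow> nat" where
  "idx4 i = (if i = 1 then 0 else if i = 2 then 1 else if i = 3 then 2 else 3)"

definition mat4 :: "real list list \<Rightarrow> real^4^4" where
  "mat4 L = (\<chi> i j. (L ! idx4 i) ! idx4 j)"

definition diag4 :: "real \<Rightarrow> real \<Rightarrow> real \<Rightarrow> real \<Rightarrow> real^4^4" where
  "diag4 a b c d = mat4 [[a,0,0,0],[0,b,0,0],[0,0,c,0],[0,0,0,d]]"

text \<open>Structure constants c i j k = c_{ij}^k of the Lie algebra whose nonzero
  brackets are [e_i,e_j] = e_k for (i,j,k) in the list (and their antisymmetric
  counterparts).\<close>
definition sc_of :: "(4 \<times> 4 \<times> 4) list \<Rightarrow> 4 \<Rightarrow> 4 \<Rightarrow> 4 \<Rightarrow> real" where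
  "sc_of L i j k = (if (i,j,k) \<in> set L then 1 else if (j,i,k) \<in> set L then -1 else 0)"

definition so3_A1 :: "4 \<Rightarrow> 4 \<Rightarrow> 4 \<Rightarrow> real" where
  "so3_A1 = sc_of [(1,2,3),(2,3,1),(3,1,2)]"

definition A41 :: "4 \<Rightarrow> 4 \<Rightarrow> 4 \<Rightarrow> real" where
  "A41 = sc_of [(2,4,1),(3,4,2)]"

definition A31_A1 :: "4 \<Rightarrow> 4 \<Rightarrow> 4 \<Rightarrow> real" where
  "A31_A1 = sc_of [(2,4,1)]"

definition br :: "(4 \<Rightarrow> 4 \<Rightarrow> 4 \<Rightarrow> real) \<Rightarrow> real^4 \<Rightarrow> real^4 \<Rightarrow> real^4" where
  "br c x y = (\<chi> k. \<Sum>i\<in>UNIV. \<Sum>j\<in>UNIV. x$i * y$j * c i j k)"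

text \<open>U : (0,1] -> GL_4(R) continuous contracts c to c' : the transformed structure
  constants U^i_{i'} U^j_{j'} (U^{-1})^{k'}_k c_{ij}^k converge to c'_{i'j'}^{k'} as eps -> 0+.\<close>
definition contracts :: "(real \<Rightarrow> real^4^4) \<Rightarrow> (4 \<Rightarrow> 4 \<Rightarrow> 4 \<Rightarrow> real) \<Rightarrow> (4 \<Rightarrow> 4 \<Rightarrow> 4 \<Rightarrow> real) \<Rightarrow> bool" where
  "contracts U c c' \<longleftrightarrow>
     continuous_on {0<..1} U \<and> (\<forall>\<epsilon>\<in>{0<..1}. invertible (U \<epsilon>)) \<and>
     (\<forall>i' j' k'. ((\<lambda>\<epsilon>. \<Sum>i\<in>UNIV. \<Sum>j\<in>UNIV. \<Sum>k\<in>UNIV.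
          U \<epsilon> $ i $ i' * U \<epsilon> $ j $ j' * matrix_inv (U \<epsilon>) $ k' $ k * c i j k)
        \<longlongrightarrow> c' i' j' k') (at_right 0))"

definition lie_iso :: "(4 \<Rightarrow> 4 \<Rightarrow> 4 \<Rightarrow> real) \<Rightarrow> (4 \<Rightarrow> 4 \<Rightarrow> 4 \<Rightarrow> real) \<Rightarrow> bool" where
  "lie_iso c c' \<longleftrightarrow> (\<exists>P::real^4^4. invertible P \<and>
      (\<forall>x y. br c (P *v x) (P *v y) = P *v br c' x y))"

definition Kc :: "real \<Rightarrow> real" where "Kc \<epsilon> = sqrt (4 * \<epsilon>^4 + 1) / 2"
definition thetap :: "real \<Rightarrow> real" where "thetap \<epsilon> = sqrt ((2 * Kc \<epsilon> + 1) / (4 * Kc \<epsilon>))"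
definition thetam :: "real \<Rightarrow> real" where "thetam \<epsilon> = sqrt ((2 * Kc \<epsilon> - 1) / (4 * Kc \<epsilon>))"

definition Umat :: "real \<Rightarrow> real^4^4" where
  "Umat \<epsilon> = mat4 [[0,0,\<epsilon>^2,0],[0,-(\<epsilon>^3),0,0],[0,0,0,\<epsilon>],[-(\<epsilon>^2),0,-1,0]]"

definition Wmat :: "real \<Rightarrow> real^4^4" where
  "Wmat \<epsilon> = mat4 [[-thetam \<epsilon>,0,0,thetap \<epsilon>],[0,1,0,0],[0,0,1,0],[thetap \<epsilon>,0,0,thetam \<epsilon>]]"

definition Wtmat :: "real \<Rightarrow> real^4^4" where
  "Wtmat \<epsilon> = mat4 [[-thetam \<epsilon>,0,-thetap \<epsilon>,0],[0,-1,0,0],[0,0,0,1],[-thetap \<epsilon>,0,thetam \<epsilon>,0]]"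

definition Dmat :: "real \<Rightarrow> real^4^4" where
  "Dmat \<epsilon> = diag4 (Kc \<epsilon> + 1/2) (\<epsilon>^3) \<epsilon> (Kc \<epsilon> - 1/2)"

end

theory Submission
  imports Defs
begin

text \<open>Part (i) is an entrywise computation from \<open>K\<^sup>2 = \<epsilon>\<^sup>4 + 1/4\<close>,
  \<open>\<theta>\<^sub>\<plusminus>\<^sup>2 = (K \<plusminus> 1/2) / (2K)\<close> and \<open>\<theta>\<^sub>+ \<theta>\<^sub>- = \<epsilon>\<^sup>2 / (2K)\<close>.
  Both \<open>U\<^sub>\<epsilon>\<close> and \<open>Wmat 0 ** Dmat \<epsilon> ** Wtmat 0\<close> have explicit inverses, so their
  transformed structure constants can be written in closed form: for \<open>U\<^sub>\<epsilon>\<close> they are those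
  of \<open>A\<^sub>4\<^sub>.\<^sub>1\<close> plus \<open>\<epsilon>\<^sup>4\<close> and \<open>\<epsilon>\<^sup>2\<close> multiples of two further brackets, for the
  second matrix they are \<open>K + 1/2\<close> times those of \<open>A\<^sub>3\<^sub>.\<^sub>1 \<oplus> A\<^sub>1\<close> plus terms of
  order \<open>\<epsilon>\<^sup>2\<close>, and \<open>K \<rightarrow> 1/2\<close>.
  The two limits are not isomorphic since their derived algebras have dimension 1 and 2.\<close>

lemma idx4_simps [simp]: "idx4 1 = 0" "idx4 2 = 1" "idx4 3 = 2" "idx4 4 = 3"
  by (simp_all add: idx4_def)

lemma mat4_nth [simp]: "mat4 L $ i $ j = L ! idx4 i ! idx4 j"
  by (simp add: mat4_def)

lemma continuous_on_mat4:
  assumes "\<forall>i j. continuous_on S (\<lambda>x. L x ! idx4 i ! idx4 j)"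
  shows "continuous_on S (\<lambda>x. mat4 (L x))"
  unfolding mat4_def using assms by (intro continuous_on_vec_lambda) auto

lemma continuous_on_UNIV_tendsto_at_right:
  "continuous_on UNIV f \<Longrightarrow> (f \<longlongrightarrow> f x) (at_right x)"
  by (meson UNIV_I continuous_on_def tendsto_within_subset subset_UNIV)

lemma matrix_inv_eqI:
  fixes A B :: "'a::field^'n^'n"
  assumes AB: "A ** B = mat 1"
  shows "invertible A" and "matrix_inv A = B"
proof -
  have BA: "B ** A = mat 1"
    using AB matrix_left_right_inverse by blast
  then show "invertible A"
    using AB invertible_def by blast
  have "A ** matrix_inv A = mat 1"
    unfolding matrix_inv_def
    using someI[of "\<lambda>A'. A ** A' = mat 1 \<and> A' ** A = mat 1"] AB BA by blast
  then have "(B ** A) ** matrix_inv A = B"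
    by (simp add: matrix_mul_assoc[symmetric])
  then show "matrix_inv A = B"
    using BA by simp
qed

definition transformed_sc ::
  "real^4^4 \<Rightarrow> (4 \<Rightarrow> 4 \<Rightarrow> 4 \<Rightarrow> real) \<Rightarrow> 4 \<Rightarrow> 4 \<Rightarrow> 4 \<Rightarrow> real" where
  "transformed_sc A c i' j' k' =
     (\<Sum>i\<in>UNIV. \<Sum>j\<in>UNIV. \<Sum>k\<in>UNIV. A $ i $ i' * A $ j $ j' * matrix_inv A $ k' $ k * c i j k)"

lemma contractsI:
  assumes "continuous_on {0<..1} U"
    and "\<And>\<epsilon>. \<epsilon> \<in> {0<..1} \<Longrightarrow> invertible (U \<epsilon>)"
    and "\<forall>\<^sub>F \<epsilon> in at_right 0. transformed_sc (U \<epsilon>) c = c\<^sub>\<epsilon> \<epsilon>"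
    and "\<And>i j k. ((\<lambda>\<epsilon>. c\<^sub>\<epsilon> \<epsilon> i j k) \<longlongrightarrow> c' i j k) (at_right 0)"
  shows "contracts U c c'"
  unfolding contracts_def
proof (intro conjI ballI allI)
  fix i j k
  have "\<forall>\<^sub>F \<epsilon> in at_right 0. c\<^sub>\<epsilon> \<epsilon> i j k = transformed_sc (U \<epsilon>) c i j k"
    using assms(3) by eventually_elim simp
  from Lim_transform_eventually[OF assms(4) this]
  show "((\<lambda>\<epsilon>. \<Sum>i'\<in>UNIV. \<Sum>j'\<in>UNIV. \<Sum>k'\<in>UNIV.
          U \<epsilon> $ i' $ i * U \<epsilon> $ j' $ j * matrix_inv (U \<epsilon>) $ k $ k' * c i' j' k')
        \<longlongrightarrow> c' i j k) (at_right 0)"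
    by (simp add: transformed_sc_def)
qed (use assms in auto)

lemma Kc_ge_half: "Kc \<epsilon> \<ge> 1/2"
  by (simp add: Kc_def)

lemma Kc_pos: "Kc \<epsilon> > 0"
  using Kc_ge_half[of \<epsilon>] by linarith

lemma Kc_gt_half: "\<epsilon> \<noteq> 0 \<Longrightarrow> Kc \<epsilon> > 1/2"
  by (simp add: Kc_def)

lemma Kc_0 [simp]: "Kc 0 = 1/2"
  by (simp add: Kc_def)

lemma Kc_square: "(Kc \<epsilon>)^2 = \<epsilon>^4 + 1/4"
  by (simp add: Kc_def power_divide)

lemma Kc_diff_mult_Kc_add: "(Kc \<epsilon> - 1/2) * (Kc \<epsilon> + 1/2) = \<epsilon>^4"
  using Kc_square[of \<epsilon>] by (simp add: algebra_simps power2_eq_square)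

lemma continuous_on_Kc: "continuous_on S Kc"
  unfolding Kc_def by (intro continuous_intros) auto

lemma thetap_square: "(thetap \<epsilon>)^2 = (Kc \<epsilon> + 1/2) / (2 * Kc \<epsilon>)"
  using Kc_ge_half[of \<epsilon>] by (simp add: thetap_def field_simps)

lemma thetam_square: "(thetam \<epsilon>)^2 = (Kc \<epsilon> - 1/2) / (2 * Kc \<epsilon>)"
  using Kc_ge_half[of \<epsilon>] by (simp add: thetam_def field_simps)

lemma thetap_mult_thetam: "thetap \<epsilon> * thetam \<epsilon> = \<epsilon>^2 / (2 * Kc \<epsilon>)"
proof -
  note K = Kc_pos[of \<epsilon>]
  have "(thetap \<epsilon> * thetam \<epsilon>)^2 = (\<epsilon>^2 / (2 * Kc \<epsilon>))^2"
    using K Kc_diff_mult_Kc_add[of \<epsilon>]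
    by (simp add: power_mult_distrib thetap_square thetam_square field_simps)
      (simp add: algebra_simps power2_eq_square power4_eq_xxxx)
  moreover have "thetap \<epsilon> * thetam \<epsilon> \<ge> 0"
    using K Kc_ge_half[of \<epsilon>] by (simp add: thetap_def thetam_def)
  ultimately show ?thesis
    using K by (simp add: power2_eq_iff_nonneg)
qed

lemma thetap_square_add_thetam_square: "(thetap \<epsilon>)^2 + (thetam \<epsilon>)^2 = 1"
  using Kc_ge_half[of \<epsilon>] by (simp add: thetap_square thetam_square field_simps)

lemma continuous_on_thetap: "continuous_on S thetap"
  unfolding thetap_def using Kc_pos
  by (intro continuous_intros continuous_on_Kc) (auto simp: less_le)

lemma continuous_on_thetam: "continuous_on S thetam"
  unfolding thetam_def using Kc_pos
  by (intro continuous_intros continuous_on_Kc) (auto simp: less_le)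

lemma thetap_0 [simp]: "thetap 0 = 1" and thetam_0 [simp]: "thetam 0 = 0"
  by (simp_all add: thetap_def thetam_def)

lemma Umat_eq_Wmat_Dmat_Wtmat: "Umat \<epsilon> = Wmat \<epsilon> ** Dmat \<epsilon> ** Wtmat \<epsilon>"
proof -
  note K = Kc_pos[of \<epsilon>]
  have entry11: "(thetam \<epsilon>)^2 * (Kc \<epsilon> + 1/2) = (thetap \<epsilon>)^2 * (Kc \<epsilon> - 1/2)"
    using K by (simp add: thetap_square thetam_square field_simps)
  have entry43: "(thetap \<epsilon>)^2 * (Kc \<epsilon> + 1/2) - (thetam \<epsilon>)^2 * (Kc \<epsilon> - 1/2) = 1"
    using K by (simp add: thetap_square thetam_square field_simps)
  have entry13:
    "thetap \<epsilon> * thetam \<epsilon> * (Kc \<epsilon> + 1/2) + thetap \<epsilon> * thetam \<epsilon> * (Kc \<epsilon> - 1/2) = \<epsilon>^2"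
    unfolding thetap_mult_thetam using K by (simp add: field_simps)
  show ?thesis
    using entry11 entry43 entry13
    by (simp add: vec_eq_iff forall_4 matrix_matrix_mult_def sum_4 Umat_def Wmat_def Wtmat_def
        Dmat_def diag4_def power2_eq_square algebra_simps)
qed

lemma orthogonal_Wmat: "orthogonal_matrix (Wmat \<epsilon>)"
  using thetap_square_add_thetam_square[of \<epsilon>]
  by (simp add: orthogonal_matrix_def vec_eq_iff forall_4 matrix_matrix_mult_def sum_4 Wmat_def
      transpose_def mat_def power2_eq_square algebra_simps)

lemma orthogonal_Wtmat: "orthogonal_matrix (Wtmat \<epsilon>)"
  using thetap_square_add_thetam_square[of \<epsilon>]
  by (simp add: orthogonal_matrix_def vec_eq_iff forall_4 matrix_matrix_mult_def sum_4 Wtmat_def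
      transpose_def mat_def power2_eq_square algebra_simps)

lemma orthogonal_matrix_invertible: "orthogonal_matrix Q \<Longrightarrow> invertible Q"
  unfolding orthogonal_matrix_def invertible_def by blast

lemma Wmat_tendsto: "(Wmat \<longlongrightarrow> Wmat 0) (at_right 0)"
proof (rule continuous_on_UNIV_tendsto_at_right)
  show "continuous_on UNIV Wmat"
    unfolding Wmat_def
    by (rule continuous_on_mat4)
      (simp add: forall_4 continuous_on_thetap continuous_on_thetam continuous_on_minus)
qed

lemma Wtmat_tendsto: "(Wtmat \<longlongrightarrow> Wtmat 0) (at_right 0)"
proof (rule continuous_on_UNIV_tendsto_at_right)
  show "continuous_on UNIV Wtmat"
    unfolding Wtmat_def
    by (rule continuous_on_mat4)
      (simp add: forall_4 continuous_on_thetap continuous_on_thetam continuous_on_minus)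
qed

lemma matrix_inv_Umat:
  assumes "\<epsilon> \<noteq> 0"
  shows "invertible (Umat \<epsilon>)"
    and "matrix_inv (Umat \<epsilon>) =
           mat4 [[-1/\<epsilon>^4, 0, 0, -1/\<epsilon>^2], [0, -1/\<epsilon>^3, 0, 0], [1/\<epsilon>^2, 0, 0, 0], [0, 0, 1/\<epsilon>, 0]]"
    (is "_ = ?V")
proof -
  have "Umat \<epsilon> ** ?V = mat 1"
    using assms
    by (simp add: Umat_def vec_eq_iff forall_4 matrix_matrix_mult_def sum_4 mat_def field_simps)
  then show "invertible (Umat \<epsilon>)" and "matrix_inv (Umat \<epsilon>) = ?V"
    by (rule matrix_inv_eqI)+
qed

lemma transformed_sc_Umat:
  assumes "\<epsilon> \<noteq> 0"
  shows "transformed_sc (Umat \<epsilon>) so3_A1 =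
    (\<lambda>i j k. A41 i j k + \<epsilon>^4 * sc_of [(2,3,4)] i j k - \<epsilon>^2 * sc_of [(2,4,3)] i j k)"
proof (intro ext)
  fix i j k :: 4
  note inv = matrix_inv_Umat(2)[OF assms]
  show "transformed_sc (Umat \<epsilon>) so3_A1 i j k =
      A41 i j k + \<epsilon>^4 * sc_of [(2,3,4)] i j k - \<epsilon>^2 * sc_of [(2,4,3)] i j k"
    using exhaust_4[of i] exhaust_4[of j] exhaust_4[of k] assms
    unfolding transformed_sc_def inv
    by (elim disjE)
      (simp_all add: Umat_def sum_4 A41_def sc_of_def so3_A1_def,
       simp_all add: field_simps eval_nat_numeral)
qed

lemma contracts_Umat: "contracts Umat so3_A1 A41"
proof (rule contractsI)
  show "continuous_on {0<..1} Umat"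
    unfolding Umat_def by (rule continuous_on_mat4) (auto simp: forall_4 intro!: continuous_intros)
  show "\<forall>\<^sub>F \<epsilon> in at_right 0. transformed_sc (Umat \<epsilon>) so3_A1 =
     (\<lambda>i j k. A41 i j k + \<epsilon>^4 * sc_of [(2,3,4)] i j k - \<epsilon>^2 * sc_of [(2,4,3)] i j k)"
    using eventually_at_right_less[of 0] by eventually_elim (simp add: transformed_sc_Umat)
  show "((\<lambda>\<epsilon>. A41 i j k + \<epsilon>^4 * sc_of [(2,3,4)] i j k - \<epsilon>^2 * sc_of [(2,4,3)] i j k)
      \<longlongrightarrow> A41 i j k) (at_right 0)" for i j k
  proof -
    have "((\<lambda>\<epsilon>. A41 i j k + \<epsilon>^4 * sc_of [(2,3,4)] i j k - \<epsilon>^2 * sc_of [(2,4,3)] i j k)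
      \<longlongrightarrow> A41 i j k + 0^4 * sc_of [(2,3,4)] i j k - 0^2 * sc_of [(2,4,3)] i j k) (at_right 0)"
      by (intro tendsto_intros)
    then show ?thesis by simp
  qed
qed (simp add: matrix_inv_Umat)

text \<open>Keeping \<open>a, b\<close>
  abstract, subject only to \<open>a b = \<epsilon>\<^sup>4\<close>, keeps the square root in \<open>K\<close> out of the
  entrywise computation.\<close>

definition Utmat :: "real \<Rightarrow> real \<Rightarrow> real \<Rightarrow> real^4^4" where
  "Utmat a b \<epsilon> = mat4 [[-a,0,0,0], [0,-(\<epsilon>^3),0,0], [0,0,0,\<epsilon>], [0,0,-b,0]]"

lemma Wmat_0_Dmat_Wtmat_0:
  "Wmat 0 ** Dmat \<epsilon> ** Wtmat 0 = Utmat (Kc \<epsilon> - 1/2) (Kc \<epsilon> + 1/2) \<epsilon>"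
  by (simp add: Wmat_def Wtmat_def Dmat_def diag4_def Utmat_def vec_eq_iff forall_4
      matrix_matrix_mult_def sum_4)

lemma matrix_inv_Utmat:
  assumes "a \<noteq> 0" "b \<noteq> 0" "\<epsilon> \<noteq> 0"
  shows "invertible (Utmat a b \<epsilon>)"
    and "matrix_inv (Utmat a b \<epsilon>) =
           mat4 [[-1/a,0,0,0], [0,-1/\<epsilon>^3,0,0], [0,0,0,-1/b], [0,0,1/\<epsilon>,0]]"
    (is "_ = ?V")
proof -
  have "Utmat a b \<epsilon> ** ?V = mat 1"
    using assms
    by (simp add: Utmat_def vec_eq_iff forall_4 matrix_matrix_mult_def sum_4 mat_def field_simps)
  then show "invertible (Utmat a b \<epsilon>)" and "matrix_inv (Utmat a b \<epsilon>) = ?V"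
    by (rule matrix_inv_eqI)+
qed

lemma transformed_sc_Utmat:
  assumes "a \<noteq> 0" "b \<noteq> 0" "\<epsilon> \<noteq> 0" "a * b = \<epsilon>^4"
  shows "transformed_sc (Utmat a b \<epsilon>) so3_A1 =
    (\<lambda>i j k. b * A31_A1 i j k + a * \<epsilon>^2 * sc_of [(1,2,4)] i j k
       - \<epsilon>^2 / b * sc_of [(1,4,2)] i j k)"
proof (intro ext)
  fix i j k :: 4
  note inv = matrix_inv_Utmat(2)[OF assms(1-3)]
  show "transformed_sc (Utmat a b \<epsilon>) so3_A1 i j k =
      b * A31_A1 i j k + a * \<epsilon>^2 * sc_of [(1,2,4)] i j k - \<epsilon>^2 / b * sc_of [(1,4,2)] i j k"
    using exhaust_4[of i] exhaust_4[of j] exhaust_4[of k] assms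
    unfolding transformed_sc_def inv
    by (elim disjE)
      (simp_all add: Utmat_def sum_4 A31_A1_def sc_of_def so3_A1_def,
       simp_all add: field_simps eval_nat_numeral)
qed

lemma Kc_tendsto: "(Kc \<longlongrightarrow> 1/2) (at_right 0)"
  using continuous_on_UNIV_tendsto_at_right[OF continuous_on_Kc, of 0] by simp

lemma contracts_Wmat_0_Dmat_Wtmat_0:
  "contracts (\<lambda>\<epsilon>. Wmat 0 ** Dmat \<epsilon> ** Wtmat 0) so3_A1 A31_A1"
  unfolding Wmat_0_Dmat_Wtmat_0
proof (rule contractsI)
  show "continuous_on {0<..1} (\<lambda>\<epsilon>. Utmat (Kc \<epsilon> - 1/2) (Kc \<epsilon> + 1/2) \<epsilon>)"
    unfolding Utmat_def
    by (rule continuous_on_mat4) (auto simp: forall_4 intro!: continuous_intros continuous_on_Kc)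
  show "invertible (Utmat (Kc \<epsilon> - 1/2) (Kc \<epsilon> + 1/2) \<epsilon>)" if "\<epsilon> \<in> {0<..1}" for \<epsilon>
    using that Kc_gt_half[of \<epsilon>] by (intro matrix_inv_Utmat) auto
  show "\<forall>\<^sub>F \<epsilon> in at_right 0.
     transformed_sc (Utmat (Kc \<epsilon> - 1/2) (Kc \<epsilon> + 1/2) \<epsilon>) so3_A1 =
     (\<lambda>i j k. (Kc \<epsilon> + 1/2) * A31_A1 i j k + (Kc \<epsilon> - 1/2) * \<epsilon>^2 * sc_of [(1,2,4)] i j k
        - \<epsilon>^2 / (Kc \<epsilon> + 1/2) * sc_of [(1,4,2)] i j k)"
    using eventually_at_right_less[of 0]
  proof eventually_elim
    case (elim \<epsilon>)
    then show ?case
      using Kc_gt_half[of \<epsilon>] by (intro transformed_sc_Utmat Kc_diff_mult_Kc_add) auto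
  qed
  show "((\<lambda>\<epsilon>. (Kc \<epsilon> + 1/2) * A31_A1 i j k + (Kc \<epsilon> - 1/2) * \<epsilon>^2 * sc_of [(1,2,4)] i j k
        - \<epsilon>^2 / (Kc \<epsilon> + 1/2) * sc_of [(1,4,2)] i j k) \<longlongrightarrow> A31_A1 i j k) (at_right 0)" for i j k
  proof -
    have "((\<lambda>\<epsilon>. (Kc \<epsilon> + 1/2) * A31_A1 i j k + (Kc \<epsilon> - 1/2) * \<epsilon>^2 * sc_of [(1,2,4)] i j k
        - \<epsilon>^2 / (Kc \<epsilon> + 1/2) * sc_of [(1,4,2)] i j k)
      \<longlongrightarrow> (1/2 + 1/2) * A31_A1 i j k + (1/2 - 1/2) * 0^2 * sc_of [(1,2,4)] i j k
        - 0^2 / (1/2 + 1/2) * sc_of [(1,4,2)] i j k) (at_right 0)"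
      by (intro tendsto_intros Kc_tendsto) auto
    then show ?thesis by simp
  qed
qed

lemma br_A31_A1: "br A31_A1 u v = (u$2 * v$4 - u$4 * v$2) *\<^sub>R axis 1 1"
  by (simp add: br_def vec_eq_iff forall_4 sum_4 axis_def A31_A1_def sc_of_def)

lemma br_A41_axis:
  "br A41 (axis 2 1) (axis 4 1) = axis 1 1"
  "br A41 (axis 3 1) (axis 4 1) = axis 2 1"
  by (simp_all add: br_def vec_eq_iff forall_4 sum_4 axis_def A41_def sc_of_def)

text \<open>The derived algebra of \<open>A\<^sub>3\<^sub>.\<^sub>1 \<oplus> A\<^sub>1\<close> is spanned by \<open>e\<^sub>1\<close>, that of \<open>A\<^sub>4\<^sub>.\<^sub>1\<close> contains
  \<open>e\<^sub>1\<close> and \<open>e\<^sub>2\<close>; an isomorphism would map both into the line through \<open>e\<^sub>1\<close>.\<close>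

lemma not_lie_iso_A31_A1_A41: "\<not> lie_iso A31_A1 A41"
proof
  assume "lie_iso A31_A1 A41"
  then obtain P :: "real^4^4" where P: "invertible P"
    and hom: "\<And>x y. br A31_A1 (P *v x) (P *v y) = P *v br A41 x y"
    unfolding lie_iso_def by blast
  obtain \<alpha> where \<alpha>: "P *v axis 1 1 = \<alpha> *\<^sub>R axis 1 1"
    using hom[of "axis 2 1" "axis 4 1"] br_A41_axis br_A31_A1 by metis
  obtain \<beta> where \<beta>: "P *v axis 2 1 = \<beta> *\<^sub>R axis 1 1"
    using hom[of "axis 3 1" "axis 4 1"] br_A41_axis br_A31_A1 by metis
  have inj: "inj ((*v) P)"
    using P by (rule inj_matrix_vector_mult)
  have "P *v (\<beta> *\<^sub>R axis 1 1) = P *v (\<alpha> *\<^sub>R axis 2 1)"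
    by (simp add: matrix_vector_mult_scaleR \<alpha> \<beta>)
  then have "\<beta> *\<^sub>R axis 1 1 = (\<alpha> *\<^sub>R axis 2 1 :: real^4)"
    by (rule injD[OF inj])
  then have "(\<beta> *\<^sub>R axis 1 1 :: real^4) $ 2 = (\<alpha> *\<^sub>R axis 2 1) $ 2"
    by simp
  then have "\<alpha> = 0"
    by (simp add: axis_def)
  then have "P *v axis 1 1 = P *v 0"
    using \<alpha> by simp
  then have "axis 1 1 = (0 :: real^4)"
    by (rule injD[OF inj])
  then show False
    by simp
qed

theorem mainTheorem7:
  shows "(\<forall>\<epsilon>\<in>{0<..1::real}. Umat \<epsilon> = Wmat \<epsilon> ** Dmat \<epsilon> ** Wtmat \<epsilon> \<and>
            orthogonal_matrix (Wmat \<epsilon>) \<and> orthogonal_matrix (Wtmat \<epsilon>))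
       \<and> (\<exists>W0 Wt0. (Wmat \<longlongrightarrow> W0) (at_right 0) \<and> (Wtmat \<longlongrightarrow> Wt0) (at_right 0) \<and>
            invertible W0 \<and> invertible Wt0 \<and>
            contracts (\<lambda>\<epsilon>. W0 ** Dmat \<epsilon> ** Wt0) so3_A1 A31_A1)
       \<and> contracts Umat so3_A1 A41
       \<and> \<not> lie_iso A31_A1 A41"
proof -
  have "invertible (Wmat 0)" and "invertible (Wtmat 0)"
    using orthogonal_Wmat orthogonal_Wtmat by (blast intro: orthogonal_matrix_invertible)+
  then show ?thesis
    using Umat_eq_Wmat_Dmat_Wtmat orthogonal_Wmat orthogonal_Wtmat Wmat_tendsto Wtmat_tendsto
      contracts_Wmat_0_Dmat_Wtmat_0 contracts_Umat not_lie_iso_A31_A1_A41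
    by blast
qed

end
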